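(* Let $\{L_t\}_{t\ge0},\{U_t\}_{t\ge1}$ satisfy the Simplified Recursion with constants $C_1,C_2,C_3>0$, where the step sizes are $\eta_t=\frac{2}{C_1(t+L)}$ for all $t\ge1$, for some integer $L\ge3$. Let $a>0$ and $\delta\in(0,1)$, and assume $\mathbb P(L_0\le a)\ge1-\delta$. Define $$K:=\max\{L-2;32\}\cdot\big(\mathbf 1_{\{L\ge32\}}+32\cdot\mathbf 1_{\{L\le31\}}\big).$$ Then $$\mathbb P\Big(\forall t\ge0:\ L_t\le 31.5\,K\max\Big\{\frac{aL}{\log(\delta^{-1})};\frac{C_2}{C_1^2};\frac{C_3^2}{C_1^2}\Big\}\frac{\log(\delta^{-1})+2\log\log(t+9)}{t+L}\Big)\ge1-2\delta.$$
   Context: Simplified Recursion: on a probability space with filtration $\{\mathcal F_t\}_{t\ge0}$, $\{L_t\}_{t\ge0}$ is a non-negative adapted process, $\{U_t\}_{t\ge1}$ is a real adapted process, $\{\eta_t\}_{t\ge1}$ is a deterministic positive sequence of step sizes, and almost surely for all $t\ge1$: $L_t\le(1-C_1\eta_t)L_{t-1}+U_t$, $\ \big|\mathbb E(U_t\mid\mathcal F_{t-1})\big|\le C_2\eta_t^2$, $\ |U_t|\le C_3\eta_t\sqrt{L_{t-1}}+C_2\eta_t^2$. *)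

theory Defs
  imports "HOL-Probability.Probability" "HOL-Probability.Conditional_Expectation"
begin

end

theory Submission
  imports Defs
begin

(* Write tau t = t + n0 (n0 is the constant L of the step sizes), c = C3/C1, d = C2/C1^2,
   Lambda = ln (1/delta) and Mx for the maximum in the bound.

   On the event L_0 <= a the recursion alone gives L_t <= c^2 + 2 d + a n0 / tau t.  For a
   window length N, the process exp (theta_t L_t - D_t), with theta_t = tau t^(3/2) / (16 Mx sqrt N)
   and D_t = 3/4 (sqrt (tau t) - sqrt n0) / sqrt N (exp_rate and exp_shift below), is a
   supermartingale while tau t <= N: expand exp y <= 1 + y + y^2 (y <= 1), use the
   conditional-mean bound on the linear term, and let the decrease of theta and the increase
   of D absorb the quadratic and the bias terms.  Ville's maximal inequality bounds the
   probability that it ever exceeds e^(Lambda/16) / (delta w).  Windows N_j = 2^(j+1) max n0 Lambda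
   with weights w_j = 1 / ((j+1)(j+2)) cost delta in total, and inverting the exponential bound
   in the window containing tau t gives the rate (Lambda + 2 ln ln (t + 9)) / tau t. *)

definition exp_rate :: "real \<Rightarrow> real \<Rightarrow> real \<Rightarrow> real" where
  "exp_rate Mx N n = n * sqrt n / (16 * Mx * sqrt N)"

definition exp_shift :: "real \<Rightarrow> real \<Rightarrow> real \<Rightarrow> real" where
  "exp_shift n\<^sub>0 N n = 3/4 * (sqrt n - sqrt n\<^sub>0) / sqrt N"

lemma exp_le_one_plus_sq:
  fixes x :: real assumes "x \<le> 1" shows "exp x \<le> 1 + x + x\<^sup>2"
proof (cases "x \<ge> 0")
  case True then show ?thesis using exp_bound assms by blast
next
  case False
  then have pos: "1 - x > 0" by simp
  have "exp x = 1 / exp (-x)" by (simp add: exp_minus field_simps)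
  also have "\<dots> \<le> 1 / (1 - x)"
    using pos exp_ge_add_one_self[of "-x"] by (intro divide_left_mono) auto
  also have "\<dots> \<le> 1 + x + x\<^sup>2"
  proof -
    have "(1 - x) * (1 + x + x\<^sup>2) = 1 - x^3"
      by (simp add: algebra_simps power2_eq_square power3_eq_cube)
    moreover have "x^3 < 0" using False by simp
    ultimately have "1 \<le> (1 - x) * (1 + x + x\<^sup>2)" by simp
    then show ?thesis using pos by (simp add: field_simps)
  qed
  finally show ?thesis .
qed

lemma exp_step_le_quadratic:
  fixes \<theta> L\<^sub>0 L\<^sub>1 r u V D :: real
  assumes "\<theta> \<ge> 0" "L\<^sub>1 \<le> r * L\<^sub>0 + u" "u\<^sup>2 \<le> V" "\<theta>\<^sup>2 * V \<le> 1"
  shows "exp (\<theta> * L\<^sub>1 - D) \<le> exp (\<theta> * r * L\<^sub>0 - D) * (1 + \<theta> * u + \<theta>\<^sup>2 * V)"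
proof -
  have sq: "(\<theta> * u)\<^sup>2 \<le> \<theta>\<^sup>2 * V"
    using assms(3) by (simp add: power_mult_distrib mult_left_mono)
  then have "\<theta> * u \<le> 1"
    using assms(4) power2_le_imp_le[of "\<theta> * u" 1] by simp
  then have "exp (\<theta> * u) \<le> 1 + \<theta> * u + \<theta>\<^sup>2 * V"
    using exp_le_one_plus_sq[of "\<theta> * u"] sq by linarith
  have "exp (\<theta> * L\<^sub>1 - D) \<le> exp (\<theta> * r * L\<^sub>0 - D + \<theta> * u)"
    using mult_left_mono[OF assms(2,1)] by (simp add: distrib_left mult.assoc)
  also have "\<dots> = exp (\<theta> * r * L\<^sub>0 - D) * exp (\<theta> * u)"
    by (rule exp_add)
  also have "\<dots> \<le> exp (\<theta> * r * L\<^sub>0 - D) * (1 + \<theta> * u + \<theta>\<^sup>2 * V)"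
    using \<open>exp (\<theta> * u) \<le> _\<close> by (intro mult_left_mono) auto
  finally show ?thesis .
qed

text \<open>AM-GM, \<open>2 c \<surd>L \<le> L + c\<^sup>2\<close>, absorbs the \<open>\<surd>L\<close>-part of the noise into half of the contraction.\<close>
lemma recursion_step_le_bound:
  fixes n c d B h L\<^sub>0 L\<^sub>1 u :: real
  assumes "3 \<le> n" "0 \<le> d" "c\<^sup>2 + 2 * d \<le> B" "0 \<le> h" "0 \<le> L\<^sub>0" "L\<^sub>0 \<le> B + h / (n - 1)"
    "L\<^sub>1 \<le> (1 - 2 / n) * L\<^sub>0 + u" "\<bar>u\<bar> \<le> 2 * c * sqrt L\<^sub>0 / n + 4 * d / n\<^sup>2"
  shows "L\<^sub>1 \<le> B + h / n"
proof -
  have n0: "n > 0" using assms by simp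
  have "2 * c * sqrt L\<^sub>0 \<le> L\<^sub>0 + c\<^sup>2"
    using assms(5) sum_squares_bound[of c "sqrt L\<^sub>0"] by (simp add: algebra_simps)
  then have "2 * c * sqrt L\<^sub>0 / n \<le> (L\<^sub>0 + c\<^sup>2) / n" using n0 by (intro divide_right_mono) auto
  then have "L\<^sub>1 \<le> (1 - 2 / n) * L\<^sub>0 + (L\<^sub>0 + c\<^sup>2) / n + 4 * d / n\<^sup>2"
    using assms(7,8) by linarith
  also have "\<dots> = (1 - 1 / n) * L\<^sub>0 + c\<^sup>2 / n + 4 * d / n\<^sup>2"
    by (simp add: add_divide_distrib diff_divide_distrib algebra_simps)
  also have "\<dots> \<le> (1 - 1 / n) * (B + h / (n - 1)) + c\<^sup>2 / n + 4 * d / n\<^sup>2"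
    using assms n0 by (intro add_right_mono mult_left_mono) auto
  also have "\<dots> = B + h / n - (B - c\<^sup>2 - 4 * d / n) / n"
    using assms by (simp add: field_simps power2_eq_square)
  also have "\<dots> \<le> B + h / n"
  proof -
    have "4 * d / n \<le> 4 * d / 3" using assms by (intro divide_left_mono) auto
    then have "0 \<le> B - c\<^sup>2 - 4 * d / n" using assms by linarith
    then show ?thesis using n0 by simp
  qed
  finally show ?thesis .
qed

lemma mult_sqrt_diff_one_ge:
  fixes n :: real assumes "n \<ge> 3"
  shows "n * sqrt n - 3/2 * sqrt n \<le> (n - 1) * sqrt (n - 1)"
proof -
  have "(n * sqrt n - 3/2 * sqrt n)\<^sup>2 = n * (n - 3/2)\<^sup>2"
    using assms by (simp add: power2_eq_square algebra_simps)
  also have "\<dots> \<le> (n - 1)^3"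
    using assms by (simp add: power2_eq_square power3_eq_cube algebra_simps)
  also have "\<dots> = ((n - 1) * sqrt (n - 1))\<^sup>2"
    using assms by (simp add: power2_eq_square power3_eq_cube algebra_simps)
  finally have "(n * sqrt n - 3/2 * sqrt n)\<^sup>2 \<le> ((n - 1) * sqrt (n - 1))\<^sup>2" .
  moreover have "0 \<le> (n - 1) * sqrt (n - 1)" using assms by simp
  ultimately show ?thesis by (rule power2_le_imp_le)
qed

lemma exp_rate_sq:
  assumes "0 \<le> n" "0 \<le> N"
  shows "(exp_rate Mx N n)\<^sup>2 = n^3 / (256 * Mx\<^sup>2 * N)"
proof -
  have "(n * sqrt n)\<^sup>2 = n^3" using assms by (simp add: power2_eq_square power3_eq_cube power_mult_distrib)
  moreover have "(sqrt N)\<^sup>2 = N" using assms by simp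
  ultimately show ?thesis by (simp add: exp_rate_def power_divide power_mult_distrib)
qed

lemma exp_rate_contraction:
  fixes n N Mx c :: real
  assumes "3 \<le> n" "n \<le> N" "0 < Mx" "c\<^sup>2 \<le> Mx"
  shows "exp_rate Mx N n * (1 - 2 / n) + 8 * (exp_rate Mx N n)\<^sup>2 * c\<^sup>2 / n\<^sup>2 \<le> exp_rate Mx N (n - 1)"
proof -
  define \<beta> where "\<beta> = 1 / (16 * Mx * sqrt N)"
  have b0: "\<beta> > 0" and sn: "sqrt n > 0" and s: "sqrt n \<le> sqrt N" using assms by (auto simp: \<beta>_def)
  have "16 * \<beta> * c\<^sup>2 * sqrt n = (c\<^sup>2 / Mx) * (sqrt n / sqrt N)"
    using assms by (simp add: \<beta>_def field_simps)
  also have "\<dots> \<le> 1 * 1" using assms s sn by (intro mult_mono) (auto simp: field_simps)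
  finally have "(16 * \<beta> * c\<^sup>2 * sqrt n) * (\<beta> * sqrt n / 2) \<le> 1 * (\<beta> * sqrt n / 2)"
    using b0 sn by (intro mult_right_mono) auto
  moreover have "8 * \<beta>\<^sup>2 * c\<^sup>2 * (sqrt n * sqrt n) = (16 * \<beta> * c\<^sup>2 * sqrt n) * (\<beta> * sqrt n / 2)"
    by (simp add: power2_eq_square field_simps)
  moreover have "sqrt n * sqrt n = n" using assms by simp
  ultimately have v: "8 * \<beta>\<^sup>2 * c\<^sup>2 * n \<le> \<beta> * sqrt n / 2" by (metis mult_1)
  have "exp_rate Mx N n * (1 - 2 / n) + 8 * (exp_rate Mx N n)\<^sup>2 * c\<^sup>2 / n\<^sup>2
      = \<beta> * (n * sqrt n - 2 * sqrt n) + 8 * \<beta>\<^sup>2 * c\<^sup>2 * n"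
    using assms sn by (simp add: exp_rate_def \<beta>_def field_simps power2_eq_square)
  also have "\<dots> \<le> \<beta> * (n * sqrt n - 3/2 * sqrt n)" using v by (simp add: algebra_simps)
  also have "\<dots> \<le> \<beta> * ((n - 1) * sqrt (n - 1))"
    using mult_sqrt_diff_one_ge[OF assms(1)] b0 by simp
  finally show ?thesis by (simp add: exp_rate_def \<beta>_def)
qed

lemma exp_rate_bias_le_exp_shift_diff:
  fixes n N Mx d n\<^sub>0 :: real
  assumes "3 \<le> n" "n \<le> N" "0 < Mx" "0 \<le> d" "d \<le> Mx"
  shows "exp_rate Mx N n * (4 * d / n\<^sup>2) + (exp_rate Mx N n)\<^sup>2 * (32 * d\<^sup>2 / n^4)
     \<le> exp_shift n\<^sub>0 N n - exp_shift n\<^sub>0 N (n - 1)"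
proof -
  have sn: "sqrt n > 0" and sN: "sqrt N > 0" using assms by auto
  have n1: "sqrt x \<le> x" if "1 \<le> x" for x :: real
    using that real_sqrt_le_iff[of x "x\<^sup>2"] by (simp add: power2_eq_square)
  have "exp_rate Mx N n * (4 * d / n\<^sup>2) = (d / Mx) / (4 * sqrt N * sqrt n)"
  proof -
    have "n = sqrt n * sqrt n" using assms by simp
    then have "exp_rate Mx N n * (4 * d / n\<^sup>2)
        = (sqrt n * sqrt n * sqrt n / (16 * Mx * sqrt N)) * (4 * d / (sqrt n * sqrt n)\<^sup>2)"
      unfolding exp_rate_def by metis
    also have "\<dots> = (d / Mx) / (4 * sqrt N * sqrt n)"
      using sn sN assms by (simp add: field_simps power2_eq_square)
    finally show ?thesis .
  qed
  also have "\<dots> \<le> 1 / (4 * sqrt N * sqrt n)"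
    using assms sn sN by (intro divide_right_mono) (auto simp: field_simps)
  finally have t1: "exp_rate Mx N n * (4 * d / n\<^sup>2) \<le> 1 / (4 * sqrt N * sqrt n)" .
  have "(exp_rate Mx N n)\<^sup>2 = n^3 / (256 * Mx\<^sup>2 * N)"
    using assms by (intro exp_rate_sq) auto
  then have "(exp_rate Mx N n)\<^sup>2 * (32 * d\<^sup>2 / n^4) = (d / Mx)\<^sup>2 / (8 * N * n)"
    using assms by (simp add: field_simps power2_eq_square power3_eq_cube eval_nat_numeral)
  also have "\<dots> \<le> 1 / (8 * sqrt N * sqrt n)"
  proof (intro frac_le)
    show "(d / Mx)\<^sup>2 \<le> 1" using assms by (simp add: power_le_one)
    show "8 * sqrt N * sqrt n \<le> 8 * N * n" using n1[of n] n1[of N] assms sN by (simp add: mult_mono)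
  qed (use sn sN in auto)
  finally have t2: "(exp_rate Mx N n)\<^sup>2 * (32 * d\<^sup>2 / n^4) \<le> 1 / (8 * sqrt N * sqrt n)" .
  have "1 / (2 * sqrt n) \<le> sqrt n - sqrt (n - 1)"
  proof -
    have "(sqrt n - sqrt (n - 1)) * (sqrt n + sqrt (n - 1)) = 1" using assms by (simp add: algebra_simps)
    moreover have "sqrt n + sqrt (n - 1) \<le> 2 * sqrt n" using assms by simp
    moreover have "sqrt (n - 1) > 0" using assms by simp
    ultimately show ?thesis using sn by (smt (verit, best) divide_le_eq mult_left_mono)
  qed
  then have "3/4 * (1 / (2 * sqrt n)) / sqrt N \<le> 3/4 * (sqrt n - sqrt (n - 1)) / sqrt N"
    using sN by (intro divide_right_mono mult_left_mono) auto
  also have "\<dots> = exp_shift n\<^sub>0 N n - exp_shift n\<^sub>0 N (n - 1)"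
    using sN by (simp add: exp_shift_def field_simps)
  finally have "1 / (4 * sqrt N * sqrt n) + 1 / (8 * sqrt N * sqrt n) \<le> exp_shift n\<^sub>0 N n - exp_shift n\<^sub>0 N (n - 1)"
    using sn sN by (simp add: field_simps)
  then show ?thesis using t1 t2 by linarith
qed

lemma exp_rate_sq_variance_le_one:
  fixes n N Mx c d h l L :: real
  assumes "3 \<le> n" "n \<le> N" "0 < Mx" "c\<^sup>2 \<le> Mx" "0 \<le> d" "d \<le> Mx" "0 \<le> h" "h \<le> Mx * l"
    "l \<le> N" "0 \<le> L" "L \<le> c\<^sup>2 + 2 * d + h / (n - 1)"
  shows "(exp_rate Mx N n)\<^sup>2 * (8 * c\<^sup>2 * L / n\<^sup>2 + 32 * d\<^sup>2 / n^4) \<le> 1"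
proof -
  have sq: "(exp_rate Mx N n)\<^sup>2 = n^3 / (256 * Mx\<^sup>2 * N)"
    using assms by (intro exp_rate_sq) auto
  have "n^3 / (256 * Mx\<^sup>2 * N) * (8 * c\<^sup>2 * L / n\<^sup>2 + 32 * d\<^sup>2 / n^4)
      = (8 * c\<^sup>2 * n * L + 32 * d\<^sup>2 / n) / (256 * Mx\<^sup>2 * N)"
    using assms by (simp add: field_simps power2_eq_square power3_eq_cube eval_nat_numeral)
  then have e: "(exp_rate Mx N n)\<^sup>2 * (8 * c\<^sup>2 * L / n\<^sup>2 + 32 * d\<^sup>2 / n^4)
      = (8 * c\<^sup>2 * n * L + 32 * d\<^sup>2 / n) / (256 * Mx\<^sup>2 * N)"
    unfolding sq .
  have l0: "l \<ge> 0" using assms by (smt (verit) mult_nonneg_nonneg zero_le_mult_iff)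
  have "h / (n - 1) \<le> Mx * l / (n - 1)" using assms by (intro divide_right_mono) auto
  then have L: "L \<le> 3 * Mx + Mx * l / (n - 1)" using assms by linarith
  have nl: "n * (l / (n - 1)) \<le> 3/2 * N"
  proof -
    have "n / (n - 1) \<le> 3/2" using assms by (simp add: field_simps)
    then have "(n / (n - 1)) * l \<le> 3/2 * N" using l0 assms by (intro mult_mono) auto
    then show ?thesis by simp
  qed
  have "8 * c\<^sup>2 * n * L \<le> 8 * Mx * n * (3 * Mx + Mx * l / (n - 1))"
    using assms L by (intro mult_mono) auto
  also have "\<dots> = 8 * Mx\<^sup>2 * (3 * n + n * (l / (n - 1)))" by (simp add: algebra_simps power2_eq_square)
  also have "\<dots> \<le> 8 * Mx\<^sup>2 * (3 * N + 3/2 * N)" using nl assms by (intro mult_left_mono) auto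
  finally have g1: "8 * c\<^sup>2 * n * L \<le> 36 * Mx\<^sup>2 * N" by simp
  have "d\<^sup>2 \<le> Mx\<^sup>2" using assms by (intro power_mono) auto
  then have "32 * d\<^sup>2 / n \<le> 32 * Mx\<^sup>2 / 3" using assms by (intro frac_le) auto
  also have "\<dots> \<le> 11 * Mx\<^sup>2 * N" using assms by (simp add: power2_eq_square mult_le_cancel_left1)
  finally have "32 * d\<^sup>2 / n \<le> 11 * Mx\<^sup>2 * N" .
  moreover have "0 \<le> Mx\<^sup>2 * N" using assms by simp
  ultimately have "8 * c\<^sup>2 * n * L + 32 * d\<^sup>2 / n \<le> 256 * Mx\<^sup>2 * N" using g1 by linarith
  then show ?thesis unfolding e using assms by simp
qed

lemma ln_2_le_ln_ln:
  fixes t :: real assumes "t \<ge> 0" shows "ln 2 \<le> ln (ln (t + 9))"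
proof -
  have "exp (2::real) = exp 1 * exp 1" by (simp flip: exp_add)
  also have "\<dots> \<le> 3 * 3" using exp_le by (intro mult_mono) auto
  finally have "exp 2 \<le> t + 9" using assms by simp
  then have "2 \<le> ln (t + 9)" using assms by (simp add: ln_ge_iff)
  then show ?thesis by simp
qed

lemma epoch_log_bound:
  fixes t l :: real and j :: nat
  assumes "t \<ge> 0" "l \<ge> 0" "2^(j+1) \<le> t + 9"
  shows "34 * l + 32 * ln ((real j + 1) * (real j + 2)) + 24 \<le> 1008 * l + 2016 * ln (ln (t + 9))"
proof -
  have l2: "ln (2::real) \<ge> 1/2" using ln2_ge_two_thirds by linarith
  have "(real j + 1) * (1/2) \<le> (real j + 1) * ln 2" using l2 by (intro mult_left_mono) auto
  also have "\<dots> = ln (2^(j+1))" by (subst ln_realpow) auto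
  also have "\<dots> \<le> ln (t + 9)" using assms by simp
  finally have "ln ((real j + 1) / 2) \<le> ln (ln (t + 9))" by simp
  then have b: "ln (real j + 1) - ln 2 \<le> ln (ln (t + 9))" by (simp add: ln_div)
  have "ln ((real j + 1) * (real j + 2)) = ln (real j + 1) + ln (real j + 2)" by (rule ln_mult_pos) auto
  also have "ln (real j + 2) \<le> ln (2 * (real j + 1))" by simp
  also have "\<dots> = ln 2 + ln (real j + 1)" by (rule ln_mult_pos) auto
  finally have c: "ln ((real j + 1) * (real j + 2)) \<le> 2 * ln (real j + 1) + ln 2" by simp
  show ?thesis using b c ln_2_le_ln_ln[OF assms(1)] l2 assms(2) by linarith
qed

lemma exists_pow2_bracket:
  fixes y :: real assumes "y > 1" shows "\<exists>j::nat. 2^j < y \<and> y \<le> 2^(j+1)"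
proof -
  obtain k :: nat where k: "y < 2^k" using real_arch_pow[of 2 y] by auto
  define k0 where "k0 = (LEAST k::nat. y \<le> 2^k)"
  have k0: "y \<le> 2^k0" unfolding k0_def by (rule LeastI[of _ k]) (use k in simp)
  with assms obtain j where j: "k0 = Suc j" by (cases k0) auto
  have "\<not> y \<le> 2^j" using not_less_Least[of j "\<lambda>k. y \<le> 2^k"] j unfolding k0_def by auto
  then show ?thesis using k0 j by (intro exI[of _ j]) auto
qed

lemma inverse_consecutive_product_sums: "(\<lambda>j. 1 / ((real j + 1) * (real j + 2))) sums 1"
proof -
  have "(\<lambda>j. inverse (real (Suc j)) - inverse (real (Suc (Suc j)))) sums (inverse (real (Suc 0)) - 0)"
    by (rule telescope_sums'[OF LIMSEQ_inverse_real_of_nat])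
  moreover have "(\<lambda>j. inverse (real (Suc j)) - inverse (real (Suc (Suc j))))
      = (\<lambda>j. 1 / ((real j + 1) * (real j + 2)))"
    by (rule ext) (simp add: field_simps)
  ultimately show ?thesis by simp
qed

lemma measurable_in_later_sigma_algebra:
  assumes "\<And>t. subalgebra M (F t)" "\<And>s t. s \<le> t \<Longrightarrow> sets (F s) \<subseteq> sets (F t)"
    and "Z \<in> borel_measurable (F t)" "t \<le> N"
  shows "Z \<in> borel_measurable (F N)"
proof -
  have "subalgebra (F N) (F t)"
    using assms(1)[of t] assms(1)[of N] assms(2)[OF assms(4)] by (auto simp: subalgebra_def)
  then show ?thesis using measurable_from_subalg assms(3) by blast
qed

definition stopped_at_level :: "real \<Rightarrow> (nat \<Rightarrow> 'a \<Rightarrow> real) \<Rightarrow> nat \<Rightarrow> 'a \<Rightarrow> real" where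
  "stopped_at_level c Z N x = (if \<forall>t\<le>N. Z t x < c then Z N x else c)"

lemma stopped_at_level_Suc_le:
  "stopped_at_level c Z (Suc N) x
    \<le> stopped_at_level c Z N x + of_bool (\<forall>t\<le>N. Z t x < c) * (Z (Suc N) x - Z N x)"
  unfolding stopped_at_level_def by (auto simp: le_Suc_eq not_less)

lemma (in prob_space) integral_stopped_at_level_le:
  fixes F :: "nat \<Rightarrow> 'a measure" and Z :: "nat \<Rightarrow> 'a \<Rightarrow> real"
  assumes sub: "\<And>t. subalgebra M (F t)"
   and mono: "\<And>s t. s \<le> t \<Longrightarrow> sets (F s) \<subseteq> sets (F t)"
   and adapted: "\<And>t. Z t \<in> borel_measurable (F t)"
   and integrable: "\<And>t. integrable M (Z t)"
   and supermart: "\<And>t A. 1 \<le> t \<Longrightarrow> t \<le> T \<Longrightarrow> A \<in> sets (F (t - 1)) \<Longrightarrow>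
        (\<integral>x. indicator A x * Z t x \<partial>M) \<le> (\<integral>x. indicator A x * Z (t - 1) x \<partial>M)"
   and "N \<le> T"
  shows "integrable M (stopped_at_level c Z N)"
    and "(\<integral>x. stopped_at_level c Z N x \<partial>M) \<le> (\<integral>x. Z 0 x \<partial>M)"
proof -
  have [measurable]: "Z t \<in> borel_measurable M" for t using measurable_from_subalg[OF sub adapted] .
  define B where "B N = {x\<in>space M. \<forall>t\<le>N. Z t x < c}" for N
  have B_F: "B N \<in> sets (F N)" for N
  proof -
    note [measurable] = measurable_in_later_sigma_algebra[OF sub mono adapted]
    have "B N = {x\<in>space (F N). \<forall>t\<le>N. Z t x < c}" using sub[of N] by (auto simp: B_def subalgebra_def)
    also have "\<dots> \<in> sets (F N)" by measurable
    finally show ?thesis .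
  qed
  have [measurable]: "B N \<in> sets M" for N using B_F sub unfolding subalgebra_def by blast
  have [measurable]: "stopped_at_level c Z N \<in> borel_measurable M" for N
    unfolding stopped_at_level_def by measurable
  show stopped_int: "integrable M (stopped_at_level c Z N)" for N
  proof (rule Bochner_Integration.integrable_bound[of _ "\<lambda>x. \<bar>Z N x\<bar> + \<bar>c\<bar>"])
    show "integrable M (\<lambda>x. \<bar>Z N x\<bar> + \<bar>c\<bar>)" using integrable by auto
    show "AE x in M. norm (stopped_at_level c Z N x) \<le> norm (\<bar>Z N x\<bar> + \<bar>c\<bar>)"
      by (simp add: stopped_at_level_def)
  qed simp
  show "(\<integral>x. stopped_at_level c Z N x \<partial>M) \<le> (\<integral>x. Z 0 x \<partial>M)"
    using \<open>N \<le> T\<close>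
  proof (induction N)
    case 0
    show ?case by (rule integral_mono[OF stopped_int integrable]) (auto simp: stopped_at_level_def)
  next
    case (Suc N)
    have int_B: "integrable M (\<lambda>x. indicator (B N) x * Z k x)" for k
      using integrable_real_mult_indicator[OF _ integrable, of "B N"] by (simp add: mult.commute)
    have "(\<integral>x. stopped_at_level c Z (Suc N) x \<partial>M)
        \<le> (\<integral>x. stopped_at_level c Z N x + (indicator (B N) x * Z (Suc N) x - indicator (B N) x * Z N x) \<partial>M)"
    proof (rule integral_mono[OF stopped_int])
      show "integrable M (\<lambda>x. stopped_at_level c Z N x + (indicator (B N) x * Z (Suc N) x - indicator (B N) x * Z N x))"
        using stopped_int int_B by simp
      show "stopped_at_level c Z (Suc N) x
          \<le> stopped_at_level c Z N x + (indicator (B N) x * Z (Suc N) x - indicator (B N) x * Z N x)"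
        if "x \<in> space M" for x
      proof -
        have "indicator (B N) x = (of_bool (\<forall>t\<le>N. Z t x < c) :: real)"
          using that by (simp add: B_def indicator_def)
        then show ?thesis using stopped_at_level_Suc_le[of c Z N x] by (simp add: right_diff_distrib)
      qed
    qed
    also have "\<dots> = (\<integral>x. stopped_at_level c Z N x \<partial>M) + ((\<integral>x. indicator (B N) x * Z (Suc N) x \<partial>M)
        - (\<integral>x. indicator (B N) x * Z N x \<partial>M))"
      using stopped_int int_B by simp
    also have "\<dots> \<le> (\<integral>x. stopped_at_level c Z N x \<partial>M)"
      using supermart[of "Suc N" "B N"] Suc.prems B_F by simp
    also have "\<dots> \<le> (\<integral>x. Z 0 x \<partial>M)" using Suc by simp
    finally show ?case .
  qed
qed

lemma (in prob_space) nonneg_supermartingale_maximal_ineq: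
  fixes F :: "nat \<Rightarrow> 'a measure" and Z :: "nat \<Rightarrow> 'a \<Rightarrow> real"
  assumes sub: "\<And>t. subalgebra M (F t)"
   and mono: "\<And>s t. s \<le> t \<Longrightarrow> sets (F s) \<subseteq> sets (F t)"
   and adapted: "\<And>t. Z t \<in> borel_measurable (F t)"
   and integrable: "\<And>t. integrable M (Z t)"
   and nonneg: "\<And>t x. x \<in> space M \<Longrightarrow> Z t x \<ge> 0"
   and supermart: "\<And>t A. 1 \<le> t \<Longrightarrow> t \<le> T \<Longrightarrow> A \<in> sets (F (t - 1)) \<Longrightarrow>
        (\<integral>x. indicator A x * Z t x \<partial>M) \<le> (\<integral>x. indicator A x * Z (t - 1) x \<partial>M)"
   and c: "c > 0"
  shows "measure M {x\<in>space M. \<exists>t\<le>T. c \<le> Z t x} \<le> (\<integral>x. Z 0 x \<partial>M) / c"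
proof -
  have stopped: "integrable M (stopped_at_level c Z T)"
    "(\<integral>x. stopped_at_level c Z T x \<partial>M) \<le> (\<integral>x. Z 0 x \<partial>M)"
    by (rule integral_stopped_at_level_le[where Z = Z and F = F and T = T and N = T];
        use sub mono adapted integrable supermart in blast)+
  have [measurable]: "Z t \<in> borel_measurable M" for t using measurable_from_subalg[OF sub adapted] .
  let ?E = "{x\<in>space M. \<exists>t\<le>T. c \<le> Z t x}"
  have [measurable]: "?E \<in> sets M" by measurable
  have "c * measure M ?E = (\<integral>x. c * indicator ?E x \<partial>M)"
    by (simp add: Int_absorb2 sets.sets_into_space)
  also have "\<dots> \<le> (\<integral>x. stopped_at_level c Z T x \<partial>M)"
  proof (rule integral_mono[OF _ stopped(1)])
    show "integrable M (\<lambda>x. c * indicator ?E x)"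
      by (intro integrable_mult_right integrable_real_indicator) (auto simp: less_top[symmetric])
    show "c * indicator ?E x \<le> stopped_at_level c Z T x" if "x \<in> space M" for x
    proof (cases "x \<in> ?E")
      case True
      then have "\<not> (\<forall>t\<le>T. Z t x < c)" by (auto simp: not_less)
      then have "stopped_at_level c Z T x = c" unfolding stopped_at_level_def by (rule if_not_P)
      then show ?thesis using True by simp
    next
      case False
      then show ?thesis using that nonneg c by (simp add: stopped_at_level_def)
    qed
  qed
  also have "\<dots> \<le> (\<integral>x. Z 0 x \<partial>M)" using stopped(2) .
  finally show ?thesis using c by (simp add: field_simps)
qed

lemma (in sigma_finite_subalgebra) integral_mult_le_of_abs_cond_exp_le:
  fixes f g :: "'a \<Rightarrow> real"
  assumes "finite_measure M"
    and f_meas: "f \<in> borel_measurable F" and f_nonneg: "\<And>x. 0 \<le> f x" and f_bounded: "AE x in M. f x \<le> K"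
    and g_int: "integrable M g" and cond_exp_bound: "AE x in M. \<bar>real_cond_exp M F g x\<bar> \<le> b"
  shows "integrable M (\<lambda>x. f x * g x)" and "(\<integral>x. f x * g x \<partial>M) \<le> b * (\<integral>x. f x \<partial>M)"
proof -
  interpret finite_measure M by (rule assms(1))
  have [measurable]: "f \<in> borel_measurable M" using measurable_from_subalg[OF subalg f_meas] .
  have f_int: "integrable M f"
    by (rule integrable_const_bound[of _ K]) (use f_bounded f_nonneg in auto)
  show fg_int: "integrable M (\<lambda>x. f x * g x)"
  proof (rule Bochner_Integration.integrable_bound[of _ "\<lambda>x. K * g x"])
    show "AE x in M. norm (f x * g x) \<le> norm (K * g x)"
      using f_bounded by eventually_elim (use f_nonneg in \<open>auto simp: abs_mult intro!: mult_right_mono\<close>)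
  qed (use g_int in auto)
  have "(\<integral>x. f x * g x \<partial>M) = (\<integral>x. f x * real_cond_exp M F g x \<partial>M)"
    using real_cond_exp_intg(2)[OF fg_int f_meas] g_int by simp
  also have "\<dots> \<le> (\<integral>x. f x * b \<partial>M)"
  proof (rule integral_mono_AE)
    show "integrable M (\<lambda>x. f x * real_cond_exp M F g x)"
      using real_cond_exp_intg(1)[OF fg_int f_meas] g_int by simp
    show "AE x in M. f x * real_cond_exp M F g x \<le> f x * b"
      using cond_exp_bound by eventually_elim (use f_nonneg in \<open>auto intro!: mult_left_mono\<close>)
  qed (use f_int in simp)
  also have "\<dots> = b * (\<integral>x. f x \<partial>M)" by (simp add: mult.commute)
  finally show "(\<integral>x. f x * g x \<partial>M) \<le> b * (\<integral>x. f x \<partial>M)" .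
qed

locale normalized_recursion = prob_space M for M :: "'a measure" +
  fixes F :: "nat \<Rightarrow> 'a measure" and L U :: "nat \<Rightarrow> 'a \<Rightarrow> real" and c d :: real and n\<^sub>0 :: nat
  assumes subalgebra_F: "\<And>t. subalgebra M (F t)"
    and filtration_mono: "\<And>s t. s \<le> t \<Longrightarrow> sets (F s) \<subseteq> sets (F t)"
    and L_adapted: "\<And>t. L t \<in> borel_measurable (F t)"
    and L_nonneg: "\<And>t x. x \<in> space M \<Longrightarrow> 0 \<le> L t x"
    and U_adapted: "\<And>t. 1 \<le> t \<Longrightarrow> U t \<in> borel_measurable (F t)"
    and U_integrable: "\<And>t. 1 \<le> t \<Longrightarrow> integrable M (U t)"
    and d_pos: "0 < d"
    and n\<^sub>0_ge_3: "3 \<le> n\<^sub>0"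
    and recursion: "AE x in M. \<forall>t\<ge>1. L t x \<le> (1 - 2 / (real t + real n\<^sub>0)) * L (t - 1) x + U t x"
    and U_bound: "AE x in M. \<forall>t\<ge>1.
      \<bar>U t x\<bar> \<le> 2 * c * sqrt (L (t - 1) x) / (real t + real n\<^sub>0) + 4 * d / (real t + real n\<^sub>0)\<^sup>2"
    and cond_exp_U: "\<And>t. 1 \<le> t \<Longrightarrow>
      AE x in M. \<bar>real_cond_exp M (F (t - 1)) (U t) x\<bar> \<le> 4 * d / (real t + real n\<^sub>0)\<^sup>2"
begin

abbreviation \<tau> :: "nat \<Rightarrow> real" where "\<tau> t \<equiv> real t + real n\<^sub>0"

definition det_bound :: "real \<Rightarrow> nat \<Rightarrow> real" where
  "det_bound a t = c\<^sup>2 + 2 * d + a * n\<^sub>0 / \<tau> t"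

lemma \<tau>_ge_3: "3 \<le> \<tau> t"
  using n\<^sub>0_ge_3 by simp

lemma AE_recursion_step: "AE x in M. \<forall>s.
    L (Suc s) x \<le> (1 - 2 / \<tau> (Suc s)) * L s x + U (Suc s) x \<and>
    \<bar>U (Suc s) x\<bar> \<le> 2 * c * sqrt (L s x) / \<tau> (Suc s) + 4 * d / (\<tau> (Suc s))\<^sup>2"
  using recursion U_bound
proof eventually_elim
  case (elim x)
  show ?case
  proof
    fix s show "L (Suc s) x \<le> (1 - 2 / \<tau> (Suc s)) * L s x + U (Suc s) x \<and>
        \<bar>U (Suc s) x\<bar> \<le> 2 * c * sqrt (L s x) / \<tau> (Suc s) + 4 * d / (\<tau> (Suc s))\<^sup>2"
      using elim(1)[rule_format, of "Suc s"] elim(2)[rule_format, of "Suc s"] by simp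
  qed
qed

lemma AE_L_le_det_bound:
  assumes "0 \<le> a"
  shows "AE x in M. L 0 x \<le> a \<longrightarrow> (\<forall>t. L t x \<le> det_bound a t)"
  using AE_recursion_step AE_space
proof eventually_elim
  case (elim x)
  show ?case
  proof (intro impI allI)
    fix t assume "L 0 x \<le> a"
    then show "L t x \<le> det_bound a t"
    proof (induction t)
      case 0
      have "det_bound a 0 = c\<^sup>2 + 2 * d + a" using n\<^sub>0_ge_3 by (simp add: det_bound_def)
      then show ?case using 0 d_pos zero_le_power2[of c] by linarith
    next
      case (Suc t)
      have "\<tau> (Suc t) - 1 = \<tau> t" by simp
      then have prev: "L t x \<le> c\<^sup>2 + 2 * d + a * n\<^sub>0 / (\<tau> (Suc t) - 1)"
        using Suc.IH Suc.prems by (simp add: det_bound_def)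
      have "L (Suc t) x \<le> (1 - 2 / \<tau> (Suc t)) * L t x + U (Suc t) x"
        and "\<bar>U (Suc t) x\<bar> \<le> 2 * c * sqrt (L t x) / \<tau> (Suc t) + 4 * d / (\<tau> (Suc t))\<^sup>2"
        using elim(1) by blast+
      then have "L (Suc t) x \<le> c\<^sup>2 + 2 * d + a * n\<^sub>0 / \<tau> (Suc t)"
        using recursion_step_le_bound[OF \<tau>_ge_3 _ order.refl _ L_nonneg[OF elim(2)] prev] d_pos assms
        by simp
      then show ?case by (simp add: det_bound_def)
    qed
  qed
qed

end

locale normalized_recursion_tail = normalized_recursion +
  fixes a Mx \<delta> :: real
  assumes a_nonneg: "0 \<le> a" and c_sq_le: "c\<^sup>2 \<le> Mx" and d_le: "d \<le> Mx"
    and \<delta>_pos: "0 < \<delta>" and \<delta>_less_1: "\<delta> < 1"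
    and a_n\<^sub>0_le: "a * n\<^sub>0 \<le> Mx * ln (1 / \<delta>)"
begin

abbreviation \<Lambda> :: real where "\<Lambda> \<equiv> ln (1 / \<delta>)"

abbreviation \<theta> :: "real \<Rightarrow> nat \<Rightarrow> real" where "\<theta> N t \<equiv> exp_rate Mx N (\<tau> t)"

abbreviation shift :: "real \<Rightarrow> nat \<Rightarrow> real" where "shift N t \<equiv> exp_shift n\<^sub>0 N (\<tau> t)"

lemma Mx_pos: "0 < Mx"
  using d_pos d_le by simp

lemma \<Lambda>_pos: "0 < \<Lambda>"
  using \<delta>_pos \<delta>_less_1 by simp

lemma \<theta>_nonneg: "0 \<le> N \<Longrightarrow> 0 \<le> \<theta> N t"
  using Mx_pos by (simp add: exp_rate_def)

lemma shift_nonneg: "0 \<le> N \<Longrightarrow> 0 \<le> shift N t"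
  by (simp add: exp_shift_def)

definition init_event :: "'a set" where
  "init_event = {x \<in> space M. L 0 x \<le> a}"

lemma init_event_F: "init_event \<in> sets (F t)"
proof -
  have "space (F 0) = space M" using subalgebra_F[of 0] by (simp add: subalgebra_def)
  then have "init_event = {x \<in> space (F 0). L 0 x \<le> a}" by (simp add: init_event_def)
  also have "\<dots> \<in> sets (F 0)" using L_adapted[of 0] by measurable
  finally show ?thesis using filtration_mono[of 0 t] by auto
qed

lemma sets_F_subset: "sets (F t) \<subseteq> sets M"
  using subalgebra_F[of t] by (simp add: subalgebra_def)

lemma L_measurable[measurable]: "L t \<in> borel_measurable M"
  using measurable_from_subalg[OF subalgebra_F L_adapted] .

lemma init_event_measurable[measurable]: "init_event \<in> sets M"
  using init_event_F sets_F_subset by blast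

lemma AE_step_and_det_bound: "AE x in M. (\<forall>s.
    L (Suc s) x \<le> (1 - 2 / \<tau> (Suc s)) * L s x + U (Suc s) x \<and>
    \<bar>U (Suc s) x\<bar> \<le> 2 * c * sqrt (L s x) / \<tau> (Suc s) + 4 * d / (\<tau> (Suc s))\<^sup>2) \<and>
    (x \<in> init_event \<longrightarrow> (\<forall>t. L t x \<le> det_bound a t))"
  using AE_recursion_step AE_L_le_det_bound[OF a_nonneg] by eventually_elim (auto simp: init_event_def)

text \<open>\<open>N\<close> is the right end of the window \<open>\<tau> t \<le> N\<close> on which this is a supermartingale.\<close>
definition exp_process :: "real \<Rightarrow> nat \<Rightarrow> 'a \<Rightarrow> real" where
  "exp_process N t x = indicator init_event x * exp (\<theta> N t * L t x - shift N t)"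

lemma exp_process_nonneg: "0 \<le> exp_process N t x"
  by (simp add: exp_process_def)

lemma exp_process_adapted: "exp_process N t \<in> borel_measurable (F t)"
proof -
  have [measurable]: "L t \<in> borel_measurable (F t)" "init_event \<in> sets (F t)"
    using L_adapted init_event_F by auto
  show ?thesis unfolding exp_process_def by measurable
qed

lemma exp_process_measurable[measurable]: "exp_process N t \<in> borel_measurable M"
  using measurable_from_subalg[OF subalgebra_F exp_process_adapted] .

lemma integrable_exp_process:
  assumes "0 \<le> N" shows "integrable M (exp_process N t)"
proof (rule integrable_const_bound[of _ "exp (\<theta> N t * det_bound a t)"])
  show "AE x in M. norm (exp_process N t x) \<le> exp (\<theta> N t * det_bound a t)"
    using AE_step_and_det_bound
  proof eventually_elim
    case (elim x)
    show ?case
    proof (cases "x \<in> init_event")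
      case True
      then have "\<theta> N t * L t x - shift N t \<le> \<theta> N t * det_bound a t"
        using elim mult_left_mono[OF _ \<theta>_nonneg[OF assms]] shift_nonneg[OF assms, of t]
        by (smt (verit))
      then show ?thesis using True by (simp add: exp_process_def)
    qed (simp add: exp_process_def)
  qed
qed simp

lemma exp_process_0_le:
  assumes "real n\<^sub>0 \<le> N" shows "exp_process N 0 x \<le> exp (\<Lambda> / 16)"
proof (cases "x \<in> init_event")
  case True
  then have "\<theta> N 0 * L 0 x \<le> \<theta> N 0 * a"
    using \<theta>_nonneg[of N 0] assms by (intro mult_left_mono) (auto simp: init_event_def)
  also have "\<dots> = (a * n\<^sub>0) * sqrt n\<^sub>0 / (16 * Mx * sqrt N)"
    by (simp add: exp_rate_def)
  also have "\<dots> \<le> (Mx * \<Lambda>) * sqrt N / (16 * Mx * sqrt N)"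
  proof (rule divide_right_mono)
    show "(a * n\<^sub>0) * sqrt n\<^sub>0 \<le> (Mx * \<Lambda>) * sqrt N"
      by (rule mult_mono) (use a_n\<^sub>0_le assms \<Lambda>_pos Mx_pos in auto)
  qed (use Mx_pos assms in auto)
  also have "\<dots> = \<Lambda> / 16"
    using Mx_pos assms n\<^sub>0_ge_3 by (simp add: field_simps)
  finally have "\<theta> N 0 * L 0 x - shift N 0 \<le> \<Lambda> / 16" by (simp add: exp_shift_def)
  then show ?thesis using True by (simp add: exp_process_def)
qed (simp add: exp_process_def)

text \<open>Substituting the recursion into \<open>exp_process N (Suc s)\<close> leaves the \<open>F s\<close>-measurable factor
  \<open>pred_factor N s\<close>; \<open>var_bound s\<close> bounds \<open>U (Suc s)\<^sup>2\<close>.\<close>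
definition pred_factor :: "real \<Rightarrow> nat \<Rightarrow> 'a \<Rightarrow> real" where
  "pred_factor N s x = indicator init_event x *
     exp (\<theta> N (Suc s) * (1 - 2 / \<tau> (Suc s)) * L s x - shift N (Suc s))"

definition var_bound :: "nat \<Rightarrow> 'a \<Rightarrow> real" where
  "var_bound s x = 8 * c\<^sup>2 * L s x / (\<tau> (Suc s))\<^sup>2 + 32 * d\<^sup>2 / (\<tau> (Suc s))^4"

lemma pred_factor_adapted: "pred_factor N s \<in> borel_measurable (F s)"
proof -
  have [measurable]: "L s \<in> borel_measurable (F s)" "init_event \<in> sets (F s)"
    using L_adapted init_event_F by auto
  show ?thesis unfolding pred_factor_def by measurable
qed

lemma var_bound_nonneg: "x \<in> space M \<Longrightarrow> 0 \<le> var_bound s x"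
  using L_nonneg[of x s] by (simp add: var_bound_def)

lemma AE_pred_factor_bounds:
  assumes "real n\<^sub>0 \<le> N" "\<Lambda> \<le> N" "\<tau> (Suc s) \<le> N"
  shows "AE x in M. pred_factor N s x \<le> exp (\<theta> N (Suc s) * det_bound a s) \<and>
    (x \<in> init_event \<longrightarrow> (\<theta> N (Suc s))\<^sup>2 * var_bound s x \<le> 1)"
  using AE_step_and_det_bound AE_space
proof eventually_elim
  case (elim x)
  show ?case
  proof (cases "x \<in> init_event")
    case True
    have L_le: "L s x \<le> det_bound a s" and L0: "0 \<le> L s x"
      using elim True L_nonneg by auto
    have contr: "0 \<le> 1 - 2 / \<tau> (Suc s)" "1 - 2 / \<tau> (Suc s) \<le> 1"
      using \<tau>_ge_3[of "Suc s"] by (auto simp: field_simps)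
    have "(1 - 2 / \<tau> (Suc s)) * L s x \<le> L s x"
      using contr L0 by (simp add: mult_left_le_one_le)
    then have "\<theta> N (Suc s) * (1 - 2 / \<tau> (Suc s)) * L s x \<le> \<theta> N (Suc s) * L s x"
      using \<theta>_nonneg[of N "Suc s"] assms(1) by (simp add: mult_left_mono mult.assoc)
    also have "\<dots> \<le> \<theta> N (Suc s) * det_bound a s"
      using L_le \<theta>_nonneg[of N "Suc s"] assms(1) by (intro mult_left_mono) auto
    finally have "pred_factor N s x \<le> exp (\<theta> N (Suc s) * det_bound a s)"
      using True shift_nonneg[of N "Suc s"] assms(1) by (simp add: pred_factor_def)
    moreover have "(\<theta> N (Suc s))\<^sup>2 * var_bound s x \<le> 1"
    proof -
      have "L s x \<le> c\<^sup>2 + 2 * d + a * n\<^sub>0 / (\<tau> (Suc s) - 1)"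
        using L_le by (simp add: det_bound_def)
      from exp_rate_sq_variance_le_one[OF \<tau>_ge_3 assms(3) Mx_pos c_sq_le _ d_le _ a_n\<^sub>0_le assms(2) L0 this]
      show ?thesis using d_pos a_nonneg by (simp add: var_bound_def)
    qed
    ultimately show ?thesis by simp
  qed (simp add: pred_factor_def)
qed

lemma AE_exp_process_Suc_le:
  assumes "real n\<^sub>0 \<le> N" "\<Lambda> \<le> N" "\<tau> (Suc s) \<le> N"
  shows "AE x in M. exp_process N (Suc s) x \<le>
    pred_factor N s x * (1 + \<theta> N (Suc s) * U (Suc s) x + (\<theta> N (Suc s))\<^sup>2 * var_bound s x)"
  using AE_step_and_det_bound AE_pred_factor_bounds[OF assms] AE_space
proof eventually_elim
  case (elim x)
  show ?case
  proof (cases "x \<in> init_event")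
    case True
    have step: "L (Suc s) x \<le> (1 - 2 / \<tau> (Suc s)) * L s x + U (Suc s) x"
      and noise: "\<bar>U (Suc s) x\<bar> \<le> 2 * c * sqrt (L s x) / \<tau> (Suc s) + 4 * d / (\<tau> (Suc s))\<^sup>2"
      using elim(1) by blast+
    have "(U (Suc s) x)\<^sup>2 \<le> (2 * c * sqrt (L s x) / \<tau> (Suc s) + 4 * d / (\<tau> (Suc s))\<^sup>2)\<^sup>2"
      using noise by (metis abs_ge_zero power2_abs power_mono)
    also have "\<dots> \<le> 2 * (2 * c * sqrt (L s x) / \<tau> (Suc s))\<^sup>2 + 2 * (4 * d / (\<tau> (Suc s))\<^sup>2)\<^sup>2"
      by (smt (verit) sum_squares_bound power2_sum)
    also have "\<dots> = var_bound s x"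
      using L_nonneg[OF elim(3)] by (simp add: var_bound_def field_simps)
    finally have U_sq: "(U (Suc s) x)\<^sup>2 \<le> var_bound s x" .
    have \<theta>0: "0 \<le> \<theta> N (Suc s)" using \<theta>_nonneg[of N "Suc s"] assms(1) by simp
    have "(\<theta> N (Suc s))\<^sup>2 * var_bound s x \<le> 1" using elim(2) True by blast
    from exp_step_le_quadratic[OF \<theta>0 step U_sq this]
    show ?thesis using True by (simp add: exp_process_def pred_factor_def)
  qed (simp add: exp_process_def pred_factor_def)
qed

lemma pred_factor_le_exp_process:
  assumes "real n\<^sub>0 \<le> N" "\<tau> (Suc s) \<le> N" "x \<in> space M"
  shows "pred_factor N s x * (1 + \<theta> N (Suc s) * (4 * d / (\<tau> (Suc s))\<^sup>2) + (\<theta> N (Suc s))\<^sup>2 * var_bound s x)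
    \<le> exp_process N s x"
proof (cases "x \<in> init_event")
  case True
  define \<theta>' where "\<theta>' = \<theta> N (Suc s)"
  define n where "n = \<tau> (Suc s)"
  have n: "3 \<le> n" "n \<le> N" "n - 1 = \<tau> s" using \<tau>_ge_3[of "Suc s"] assms by (auto simp: n_def)
  have "pred_factor N s x * (1 + \<theta>' * (4 * d / n\<^sup>2) + \<theta>'\<^sup>2 * var_bound s x)
      \<le> pred_factor N s x * exp (\<theta>' * (4 * d / n\<^sup>2) + \<theta>'\<^sup>2 * var_bound s x)"
    using exp_ge_add_one_self by (intro mult_left_mono) (auto simp: pred_factor_def add.assoc)
  also have "\<dots> = exp (\<theta>' * (1 - 2 / n) * L s x - shift N (Suc s) + \<theta>' * (4 * d / n\<^sup>2) + \<theta>'\<^sup>2 * var_bound s x)"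
    using True by (simp add: pred_factor_def \<theta>'_def n_def add.assoc flip: exp_add)
  also have "\<dots> \<le> exp (\<theta> N s * L s x - shift N s)"
  proof -
    have "\<theta>' * (1 - 2 / n) + 8 * \<theta>'\<^sup>2 * c\<^sup>2 / n\<^sup>2 \<le> \<theta> N s"
      using exp_rate_contraction[OF n(1,2) Mx_pos c_sq_le] n(3) by (simp add: \<theta>'_def n_def)
    then have "(\<theta>' * (1 - 2 / n) + 8 * \<theta>'\<^sup>2 * c\<^sup>2 / n\<^sup>2) * L s x \<le> \<theta> N s * L s x"
      using L_nonneg[OF assms(3)] by (rule mult_right_mono)
    moreover have "\<theta>' * (4 * d / n\<^sup>2) + \<theta>'\<^sup>2 * (32 * d\<^sup>2 / n^4) \<le> shift N (Suc s) - shift N s"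
      using exp_rate_bias_le_exp_shift_diff[OF n(1,2) Mx_pos _ d_le, of "real n\<^sub>0"] n(3) d_pos
      by (simp add: \<theta>'_def n_def)
    ultimately have "(\<theta>' * (1 - 2 / n) + 8 * \<theta>'\<^sup>2 * c\<^sup>2 / n\<^sup>2) * L s x
        + (\<theta>' * (4 * d / n\<^sup>2) + \<theta>'\<^sup>2 * (32 * d\<^sup>2 / n^4)) - shift N (Suc s)
        \<le> \<theta> N s * L s x - shift N s"
      by linarith
    moreover have "\<theta>' * (1 - 2 / n) * L s x - shift N (Suc s) + \<theta>' * (4 * d / n\<^sup>2) + \<theta>'\<^sup>2 * var_bound s x
        = (\<theta>' * (1 - 2 / n) + 8 * \<theta>'\<^sup>2 * c\<^sup>2 / n\<^sup>2) * L s x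
          + (\<theta>' * (4 * d / n\<^sup>2) + \<theta>'\<^sup>2 * (32 * d\<^sup>2 / n^4)) - shift N (Suc s)"
      by (simp add: var_bound_def n_def algebra_simps)
    ultimately show ?thesis by simp
  qed
  finally show ?thesis using True by (simp add: exp_process_def \<theta>'_def n_def)
qed (simp add: exp_process_def pred_factor_def)

lemma sigma_finite_subalgebra_F: "sigma_finite_subalgebra M (F t)"
proof (rule finite_measure_subalgebra_is_sigma_finite)
  show "finite_measure_subalgebra M (F t)"
    unfolding finite_measure_subalgebra_def finite_measure_subalgebra_axioms_def
    using finite_measure_axioms subalgebra_F by auto
qed

lemma integrable_pred_factor:
  assumes N: "real n\<^sub>0 \<le> N" "\<Lambda> \<le> N" "\<tau> (Suc s) \<le> N" and A: "A \<in> sets M"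
  defines "f \<equiv> \<lambda>x. indicator A x * pred_factor N s x"
  shows "AE x in M. f x \<le> exp (\<theta> N (Suc s) * det_bound a s)"
    and "integrable M f"
    and "integrable M (\<lambda>x. f x * (1 + (\<theta> N (Suc s))\<^sup>2 * var_bound s x))"
proof -
  define K where "K = exp (\<theta> N (Suc s) * det_bound a s)"
  have [measurable]: "pred_factor N s \<in> borel_measurable M"
    using measurable_from_subalg[OF subalgebra_F pred_factor_adapted] .
  have [measurable]: "f \<in> borel_measurable M" using A unfolding f_def by measurable
  have f_nonneg: "0 \<le> f x" for x by (simp add: f_def pred_factor_def)
  have f_bounds: "AE x in M. f x \<le> K \<and> f x * (1 + (\<theta> N (Suc s))\<^sup>2 * var_bound s x) \<le> 2 * K"
    using AE_pred_factor_bounds[OF N] AE_space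
  proof eventually_elim
    case (elim x)
    show ?case
    proof (cases "x \<in> init_event")
      case True
      have "f x \<le> K" using elim(1) by (auto simp: f_def K_def indicator_def pred_factor_def)
      moreover have "(\<theta> N (Suc s))\<^sup>2 * var_bound s x \<le> 1" using elim(1) True by simp
      moreover have "f x * ((\<theta> N (Suc s))\<^sup>2 * var_bound s x) \<le> f x * 1"
        using calculation(2) f_nonneg by (rule mult_left_mono)
      ultimately show ?thesis by (simp add: distrib_left)
    qed (simp add: f_def pred_factor_def K_def)
  qed
  then show "AE x in M. f x \<le> exp (\<theta> N (Suc s) * det_bound a s)" by (auto simp: K_def)
  show "integrable M f"
    by (rule integrable_const_bound[of _ K]) (use f_bounds f_nonneg in auto)
  show "integrable M (\<lambda>x. f x * (1 + (\<theta> N (Suc s))\<^sup>2 * var_bound s x))"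
  proof (rule integrable_const_bound[of _ "2 * K"])
    show "AE x in M. norm (f x * (1 + (\<theta> N (Suc s))\<^sup>2 * var_bound s x)) \<le> 2 * K"
      using f_bounds AE_space by eventually_elim (use f_nonneg var_bound_nonneg in auto)
  qed (simp add: var_bound_def)
qed

lemma exp_process_supermartingale:
  assumes N: "real n\<^sub>0 \<le> N" "\<Lambda> \<le> N" "\<tau> (Suc s) \<le> N" and A: "A \<in> sets (F s)"
  shows "(\<integral>x. indicator A x * exp_process N (Suc s) x \<partial>M) \<le> (\<integral>x. indicator A x * exp_process N s x \<partial>M)"
proof -
  interpret sub: sigma_finite_subalgebra M "F s" by (rule sigma_finite_subalgebra_F)
  define f where "f x = indicator A x * pred_factor N s x" for x
  define \<theta>' where "\<theta>' = \<theta> N (Suc s)"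
  define b where "b = 4 * d / (\<tau> (Suc s))\<^sup>2"
  have A_M: "A \<in> sets M" using A sets_F_subset by blast
  have f_bound: "AE x in M. f x \<le> exp (\<theta>' * det_bound a s)"
    using integrable_pred_factor(1)[OF N A_M] by (simp add: f_def \<theta>'_def)
  have f_int: "integrable M f"
    using integrable_pred_factor(2)[OF N A_M] by (simp add: f_def[abs_def])
  have fV_int: "integrable M (\<lambda>x. f x * (1 + \<theta>'\<^sup>2 * var_bound s x))"
    using integrable_pred_factor(3)[OF N A_M] by (simp add: f_def \<theta>'_def)
  have f_F: "f \<in> borel_measurable (F s)"
  proof -
    have [measurable]: "pred_factor N s \<in> borel_measurable (F s)" "A \<in> sets (F s)"
      using pred_factor_adapted A by auto
    show ?thesis unfolding f_def[abs_def] by measurable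
  qed
  have cond_exp: "AE x in M. \<bar>real_cond_exp M (F s) (U (Suc s)) x\<bar> \<le> b"
    using cond_exp_U[of "Suc s"] by (simp add: b_def)
  have fU_int: "integrable M (\<lambda>x. f x * U (Suc s) x)"
    and fU_le: "(\<integral>x. f x * U (Suc s) x \<partial>M) \<le> b * (\<integral>x. f x \<partial>M)"
    using sub.integral_mult_le_of_abs_cond_exp_le[OF finite_measure_axioms f_F _ f_bound
        U_integrable[of "Suc s"] cond_exp]
    by (auto simp: f_def pred_factor_def)
  have Z_int: "integrable M (\<lambda>x. indicator A x * exp_process N t x)" for t
    using integrable_real_mult_indicator[OF A_M integrable_exp_process, of N t] N(1)
    by (simp add: mult.commute)
  have "(\<integral>x. indicator A x * exp_process N (Suc s) x \<partial>M)
      \<le> (\<integral>x. f x * (1 + \<theta>'\<^sup>2 * var_bound s x) + \<theta>' * (f x * U (Suc s) x) \<partial>M)"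
  proof (rule integral_mono_AE[OF Z_int])
    show "AE x in M. indicator A x * exp_process N (Suc s) x
        \<le> f x * (1 + \<theta>'\<^sup>2 * var_bound s x) + \<theta>' * (f x * U (Suc s) x)"
      using AE_exp_process_Suc_le[OF N]
      by eventually_elim (auto simp: f_def \<theta>'_def indicator_def algebra_simps)
  qed (use fV_int fU_int in simp)
  also have "\<dots> = (\<integral>x. f x * (1 + \<theta>'\<^sup>2 * var_bound s x) \<partial>M) + \<theta>' * (\<integral>x. f x * U (Suc s) x \<partial>M)"
    using fV_int fU_int by simp
  also have "\<dots> \<le> (\<integral>x. f x * (1 + \<theta>'\<^sup>2 * var_bound s x) \<partial>M) + \<theta>' * (b * (\<integral>x. f x \<partial>M))"
    using fU_le \<theta>_nonneg[of N "Suc s"] N(1) by (simp add: \<theta>'_def mult_left_mono)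
  also have "\<dots> = (\<integral>x. f x * (1 + \<theta>'\<^sup>2 * var_bound s x) + (\<theta>' * b) * f x \<partial>M)"
    using f_int fV_int by (simp add: mult.assoc)
  also have "\<dots> \<le> (\<integral>x. indicator A x * exp_process N s x \<partial>M)"
  proof (rule integral_mono[OF _ Z_int])
    show "integrable M (\<lambda>x. f x * (1 + \<theta>'\<^sup>2 * var_bound s x) + (\<theta>' * b) * f x)"
      using f_int fV_int by simp
    show "f x * (1 + \<theta>'\<^sup>2 * var_bound s x) + (\<theta>' * b) * f x \<le> indicator A x * exp_process N s x"
      if "x \<in> space M" for x
      using pred_factor_le_exp_process[OF N(1,3) that] exp_process_nonneg[of N s x]
      by (auto simp: f_def \<theta>'_def b_def indicator_def algebra_simps)
  qed
  finally show ?thesis .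
qed

definition horizon :: "real \<Rightarrow> nat" where
  "horizon N = nat \<lfloor>N\<rfloor> - n\<^sub>0"

lemma \<tau>_le_of_le_horizon:
  assumes "1 \<le> t" "t \<le> horizon N" shows "\<tau> t \<le> N"
proof -
  have "t + n\<^sub>0 \<le> nat \<lfloor>N\<rfloor>" using assms unfolding horizon_def by linarith
  then have "real (t + n\<^sub>0) \<le> real (nat \<lfloor>N\<rfloor>)" by (simp only: of_nat_le_iff)
  then show ?thesis using assms(1) by linarith
qed

lemma exp_process_exceed_prob:
  assumes N: "real n\<^sub>0 \<le> N" "\<Lambda> \<le> N" and w: "0 < w"
  shows "measure M {x\<in>space M. \<exists>t\<le>horizon N. exp (\<Lambda> / 16) / (\<delta> * w) \<le> exp_process N t x} \<le> \<delta> * w"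
proof -
  have N0: "0 \<le> N" using N by simp
  have level_pos: "0 < exp (\<Lambda> / 16) / (\<delta> * w)" using \<delta>_pos w by simp
  have "measure M {x\<in>space M. \<exists>t\<le>horizon N. exp (\<Lambda> / 16) / (\<delta> * w) \<le> exp_process N t x}
      \<le> (\<integral>x. exp_process N 0 x \<partial>M) / (exp (\<Lambda> / 16) / (\<delta> * w))"
  proof (rule nonneg_supermartingale_maximal_ineq[OF subalgebra_F filtration_mono exp_process_adapted
        integrable_exp_process[OF N0] exp_process_nonneg _ level_pos])
    fix t A assume t: "1 \<le> t" "t \<le> horizon N" and A: "A \<in> sets (F (t - 1))"
    then obtain s where s: "t = Suc s" by (cases t) auto
    show "(\<integral>x. indicator A x * exp_process N t x \<partial>M) \<le> (\<integral>x. indicator A x * exp_process N (t - 1) x \<partial>M)"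
      using exp_process_supermartingale[OF N _ A[unfolded s]] \<tau>_le_of_le_horizon[OF t] unfolding s by simp
  qed
  also have "\<dots> \<le> exp (\<Lambda> / 16) / (exp (\<Lambda> / 16) / (\<delta> * w))"
  proof (rule divide_right_mono)
    have "(\<integral>x. exp_process N 0 x \<partial>M) \<le> (\<integral>x. exp (\<Lambda> / 16) \<partial>M)"
      by (rule integral_mono[OF integrable_exp_process[OF N0]]) (use exp_process_0_le[OF N(1)] in auto)
    then show "(\<integral>x. exp_process N 0 x \<partial>M) \<le> exp (\<Lambda> / 16)" by (simp add: prob_space)
  qed (use level_pos in simp)
  also have "\<dots> = \<delta> * w" using \<delta>_pos w by simp
  finally show ?thesis .
qed

definition epoch_level :: "nat \<Rightarrow> real" where
  "epoch_level j = max n\<^sub>0 \<Lambda> * 2^(j+1)"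

definition epoch_weight :: "nat \<Rightarrow> real" where
  "epoch_weight j = 1 / ((real j + 1) * (real j + 2))"

definition epoch_failure :: "nat \<Rightarrow> 'a set" where
  "epoch_failure j = {x\<in>space M. \<exists>t\<le>horizon (epoch_level j).
     exp (\<Lambda> / 16) / (\<delta> * epoch_weight j) \<le> exp_process (epoch_level j) t x}"

lemma epoch_level_ge: "max n\<^sub>0 \<Lambda> \<le> epoch_level j"
proof -
  have "max n\<^sub>0 \<Lambda> * 1 \<le> max n\<^sub>0 \<Lambda> * 2^(j+1)"
    using \<Lambda>_pos by (intro mult_left_mono one_le_power) auto
  then show ?thesis by (simp add: epoch_level_def)
qed

lemma measure_epoch_failures_le: "measure M (\<Union>j. epoch_failure j) \<le> \<delta>"
proof -
  have [measurable]: "epoch_failure j \<in> sets M" for j unfolding epoch_failure_def by measurable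
  have failure_le: "measure M (epoch_failure j) \<le> \<delta> * epoch_weight j" for j
    unfolding epoch_failure_def
    using epoch_level_ge[of j] by (intro exp_process_exceed_prob) (auto simp: epoch_weight_def)
  have weights: "(\<lambda>j. \<delta> * epoch_weight j) sums \<delta>"
    using sums_mult[OF inverse_consecutive_product_sums, of \<delta>] by (simp add: epoch_weight_def)
  have summable: "summable (\<lambda>j. measure M (epoch_failure j))"
    by (rule summable_comparison_test'[OF sums_summable[OF weights], of 0]) (use failure_le in auto)
  have "measure M (\<Union>j. epoch_failure j) \<le> (\<Sum>j. measure M (epoch_failure j))"
    by (rule finite_measure_subadditive_countably) (use summable in auto)
  also have "\<dots> \<le> (\<Sum>j. \<delta> * epoch_weight j)"
    by (rule suminf_le[OF failure_le summable sums_summable[OF weights]])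
  also have "\<dots> = \<delta>" using weights by (simp add: sums_iff)
  finally show ?thesis .
qed

lemma L_lt_of_exp_process_lt:
  assumes x: "x \<in> init_event" and N: "0 < N" "\<tau> t \<le> N" "N \<le> 4 * \<tau> t" and w: "0 < w"
    and below: "exp_process N t x < exp (\<Lambda> / 16) / (\<delta> * w)"
  shows "L t x < Mx * (34 * \<Lambda> + 32 * ln (1 / w) + 24) / \<tau> t"
proof -
  have \<tau>_pos: "0 < \<tau> t" using \<tau>_ge_3[of t] by simp
  have "exp \<Lambda> = 1 / \<delta>" "exp (ln (1 / w)) = 1 / w" using \<delta>_pos w by auto
  then have "exp (\<Lambda> / 16) / (\<delta> * w) = exp (\<Lambda> / 16 + \<Lambda> + ln (1 / w))"
    unfolding exp_add by simp
  then have "\<theta> N t * L t x - shift N t < 17/16 * \<Lambda> + ln (1 / w)"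
    using below x by (simp add: exp_process_def)
  moreover have "shift N t \<le> 3/4"
  proof -
    have "sqrt (\<tau> t) \<le> sqrt N" using N(2) by simp
    then have "sqrt (\<tau> t) - sqrt n\<^sub>0 \<le> sqrt N" using real_sqrt_ge_zero[of n\<^sub>0] by linarith
    then have "(sqrt (\<tau> t) - sqrt n\<^sub>0) / sqrt N \<le> 1" using N(1) by (simp add: divide_le_eq)
    then have "3/4 * ((sqrt (\<tau> t) - sqrt n\<^sub>0) / sqrt N) \<le> 3/4 * 1" by (rule mult_left_mono) simp
    then show ?thesis unfolding exp_shift_def by (simp only: times_divide_eq_right mult_1_right)
  qed
  moreover have "\<tau> t / (32 * Mx) \<le> \<theta> N t"
  proof -
    have "sqrt N \<le> sqrt (4 * \<tau> t)" using N(3) by simp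
    also have "\<dots> = 2 * sqrt (\<tau> t)" by (metis real_sqrt_four real_sqrt_mult)
    finally have "\<tau> t * (1/2) \<le> \<tau> t * (sqrt (\<tau> t) / sqrt N)"
      using N(1) \<tau>_pos by (intro mult_left_mono) (auto simp: field_simps)
    then have "\<tau> t * (1/2) / (16 * Mx) \<le> \<tau> t * (sqrt (\<tau> t) / sqrt N) / (16 * Mx)"
      using Mx_pos by (intro divide_right_mono) auto
    moreover have "\<theta> N t = \<tau> t * (sqrt (\<tau> t) / sqrt N) / (16 * Mx)" by (simp add: exp_rate_def)
    ultimately show ?thesis by simp
  qed
  then have "\<tau> t / (32 * Mx) * L t x \<le> \<theta> N t * L t x"
    using L_nonneg x by (intro mult_right_mono) (auto simp: init_event_def)
  ultimately have "\<tau> t / (32 * Mx) * L t x < 17/16 * \<Lambda> + ln (1 / w) + 3/4" by linarith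
  then show ?thesis using Mx_pos \<tau>_pos by (simp add: field_simps)
qed

lemma L_le_tail_rate_late:
  assumes x: "x \<in> init_event" "\<forall>j. x \<notin> epoch_failure j" and t: "0 < t" "\<Lambda> < \<tau> t"
  shows "L t x \<le> 1008 * Mx * (\<Lambda> + 2 * ln (ln (real t + 9))) / \<tau> t"
proof -
  define N\<^sub>0 where "N\<^sub>0 = max (real n\<^sub>0) \<Lambda>"
  have N\<^sub>0_pos: "0 < N\<^sub>0" using \<Lambda>_pos by (simp add: N\<^sub>0_def)
  have "1 < \<tau> t / N\<^sub>0" using t N\<^sub>0_pos by (simp add: N\<^sub>0_def field_simps)
  then obtain j where j: "2^j < \<tau> t / N\<^sub>0" "\<tau> t / N\<^sub>0 \<le> 2^(j+1)"
    using exists_pow2_bracket by blast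
  have lower: "N\<^sub>0 * 2^j < \<tau> t" and upper: "\<tau> t \<le> epoch_level j"
    using j N\<^sub>0_pos by (simp_all add: epoch_level_def N\<^sub>0_def field_simps)
  have "epoch_level j = 2 * (N\<^sub>0 * 2^j)" by (simp add: epoch_level_def N\<^sub>0_def)
  then have level_le: "epoch_level j \<le> 4 * \<tau> t" using lower \<tau>_ge_3[of t] by simp
  have t_le: "t \<le> horizon (epoch_level j)"
  proof -
    have "t + n\<^sub>0 \<le> nat \<lfloor>epoch_level j\<rfloor>" by (rule le_nat_floor) (use upper in simp)
    then show ?thesis by (simp add: horizon_def)
  qed
  have "x \<in> space M" "x \<notin> epoch_failure j" using x by (auto simp: init_event_def)
  then have "\<not> exp (\<Lambda> / 16) / (\<delta> * epoch_weight j) \<le> exp_process (epoch_level j) t x"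
    using t_le unfolding epoch_failure_def by blast
  then have "exp_process (epoch_level j) t x < exp (\<Lambda> / 16) / (\<delta> * epoch_weight j)" by simp
  then have "L t x < Mx * (34 * \<Lambda> + 32 * ln (1 / epoch_weight j) + 24) / \<tau> t"
    using N\<^sub>0_pos epoch_level_ge[of j]
    by (intro L_lt_of_exp_process_lt[OF x(1) _ upper level_le]) (auto simp: epoch_weight_def N\<^sub>0_def)
  also have "\<dots> = Mx * (34 * \<Lambda> + 32 * ln ((real j + 1) * (real j + 2)) + 24) / \<tau> t"
    by (simp add: epoch_weight_def)
  also have "\<dots> \<le> Mx * (1008 * \<Lambda> + 2016 * ln (ln (real t + 9))) / \<tau> t"
  proof -
    have "real n\<^sub>0 * 2^j \<le> N\<^sub>0 * 2^j" by (intro mult_right_mono) (auto simp: N\<^sub>0_def)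
    moreover have "2 * 2^j - 2 \<le> real n\<^sub>0 * 2^j - real n\<^sub>0"
    proof -
      have "2 * (2^j - 1) \<le> real n\<^sub>0 * (2^j - 1)"
        using n\<^sub>0_ge_3 one_le_power[of "2::real" j] by (intro mult_right_mono) auto
      then show ?thesis by (simp add: right_diff_distrib)
    qed
    ultimately have "2 * 2^j \<le> real t + 2" using lower by linarith
    then have "2^(j+1) \<le> real t + 9" by simp
    then show ?thesis using epoch_log_bound[of "real t" \<Lambda> j] \<Lambda>_pos Mx_pos \<tau>_ge_3[of t]
      by (intro divide_right_mono mult_left_mono) auto
  qed
  also have "\<dots> = 1008 * Mx * (\<Lambda> + 2 * ln (ln (real t + 9))) / \<tau> t" by (simp add: algebra_simps)
  finally show ?thesis by simp
qed

lemma L_le_tail_rate: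
  assumes x: "x \<in> init_event" "\<forall>t. L t x \<le> det_bound a t" "\<forall>j. x \<notin> epoch_failure j"
  shows "L t x \<le> 1008 * Mx * (\<Lambda> + 2 * ln (ln (real t + 9))) / \<tau> t"
proof -
  have "0 \<le> ln (ln (real t + 9))" using ln_2_le_ln_ln[of "real t"] ln_ge_zero[of 2] by linarith
  then have rate_ge: "4 * Mx * \<Lambda> / \<tau> t \<le> 1008 * Mx * (\<Lambda> + 2 * ln (ln (real t + 9))) / \<tau> t"
    using Mx_pos \<Lambda>_pos \<tau>_ge_3[of t] by (intro divide_right_mono) auto
  consider "t = 0" | "0 < t" "\<tau> t \<le> \<Lambda>" | "0 < t" "\<Lambda> < \<tau> t" by linarith
  then show ?thesis
  proof cases
    case 1
    have "L t x \<le> a" using x(1) 1 by (simp add: init_event_def)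
    also have "\<dots> \<le> 4 * Mx * \<Lambda> / \<tau> t"
    proof -
      have "a * n\<^sub>0 \<le> 4 * Mx * \<Lambda>" using a_n\<^sub>0_le mult_pos_pos[OF Mx_pos \<Lambda>_pos] by linarith
      then show ?thesis using 1 n\<^sub>0_ge_3 by (simp add: field_simps)
    qed
    finally show ?thesis using rate_ge by simp
  next
    case 2
    have "L t x \<le> c\<^sup>2 + 2 * d + a * n\<^sub>0 / \<tau> t" using x(2) by (simp add: det_bound_def)
    also have "\<dots> \<le> 3 * Mx * (\<Lambda> / \<tau> t) + Mx * \<Lambda> / \<tau> t"
    proof -
      have "1 \<le> \<Lambda> / \<tau> t" using 2 \<tau>_ge_3[of t] by simp
      then have "3 * Mx * 1 \<le> 3 * Mx * (\<Lambda> / \<tau> t)" using Mx_pos by (intro mult_left_mono) auto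
      moreover have "a * n\<^sub>0 / \<tau> t \<le> Mx * \<Lambda> / \<tau> t"
        using a_n\<^sub>0_le \<tau>_ge_3[of t] by (intro divide_right_mono) auto
      ultimately show ?thesis using c_sq_le d_le by linarith
    qed
    finally show ?thesis using rate_ge by simp
  next
    case 3
    then show ?thesis using L_le_tail_rate_late x(1,3) by blast
  qed
qed

lemma tail_bound:
  assumes "1008 \<le> \<kappa>"
  shows "measure M init_event - \<delta> \<le>
    measure M {x\<in>space M. \<forall>t. L t x \<le> \<kappa> * Mx * (\<Lambda> + 2 * ln (ln (real t + 9))) / \<tau> t}"
  (is "_ \<le> measure M ?S")
proof -
  have [measurable]: "epoch_failure j \<in> sets M" for j unfolding epoch_failure_def by measurable
  have [measurable]: "?S \<in> sets M" by measurable
  have rate_mono: "1008 * Mx * (\<Lambda> + 2 * ln (ln (real t + 9))) / \<tau> t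
      \<le> \<kappa> * Mx * (\<Lambda> + 2 * ln (ln (real t + 9))) / \<tau> t" for t
    using ln_2_le_ln_ln[of "real t"] ln_ge_zero[of 2] Mx_pos \<Lambda>_pos \<tau>_ge_3[of t] assms
    by (intro divide_right_mono mult_right_mono) auto
  have "measure M init_event \<le> measure M (?S \<union> (\<Union>j. epoch_failure j))"
  proof (rule finite_measure_mono_AE)
    show "AE x in M. x \<in> init_event \<longrightarrow> x \<in> ?S \<union> (\<Union>j. epoch_failure j)"
      using AE_step_and_det_bound
    proof eventually_elim
      case (elim x)
      have "L t x \<le> \<kappa> * Mx * (\<Lambda> + 2 * ln (ln (real t + 9))) / \<tau> t"
        if "x \<in> init_event" "\<forall>j. x \<notin> epoch_failure j" for t
        using L_le_tail_rate[of x t] rate_mono[of t] elim that by (meson order_trans)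
      then show ?case by (auto simp: init_event_def)
    qed
  qed measurable
  also have "\<dots> \<le> measure M ?S + measure M (\<Union>j. epoch_failure j)"
    by (rule measure_Un_le) auto
  finally show ?thesis using measure_epoch_failures_le by linarith
qed

end

lemma step_size_scaling:
  fixes C\<^sub>1 C\<^sub>2 C\<^sub>3 n s :: real assumes "C\<^sub>1 \<noteq> 0" "n \<noteq> 0"
  shows "C\<^sub>1 * (2 / (C\<^sub>1 * n)) = 2 / n"
    and "C\<^sub>3 * (2 / (C\<^sub>1 * n)) * s = 2 * (C\<^sub>3 / C\<^sub>1) * s / n"
    and "C\<^sub>2 * (2 / (C\<^sub>1 * n))\<^sup>2 = 4 * (C\<^sub>2 / C\<^sub>1\<^sup>2) / n\<^sup>2"
  using assms by (simp_all add: field_simps power2_eq_square)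

lemma normalized_recursion_of_step_sizes:
  fixes M :: "'a measure" and \<eta> :: "nat \<Rightarrow> real"
  assumes "prob_space M" "\<And>t. subalgebra M (F t)" "\<And>s t. s \<le> t \<Longrightarrow> sets (F s) \<subseteq> sets (F t)"
    "\<And>t. L t \<in> borel_measurable (F t)" "\<And>t x. x \<in> space M \<Longrightarrow> 0 \<le> L t x"
    "\<And>t. 1 \<le> t \<Longrightarrow> U t \<in> borel_measurable (F t)" "\<And>t. 1 \<le> t \<Longrightarrow> integrable M (U t)"
    "0 < C\<^sub>1" "0 < C\<^sub>2" "3 \<le> n\<^sub>0"
    and eta: "\<And>t. 1 \<le> t \<Longrightarrow> \<eta> t = 2 / (C\<^sub>1 * (real t + real n\<^sub>0))"
    and recursion: "AE x in M. \<forall>t\<ge>1. L t x \<le> (1 - C\<^sub>1 * \<eta> t) * L (t - 1) x + U t x"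
    and U_bound: "AE x in M. \<forall>t\<ge>1. \<bar>U t x\<bar> \<le> C\<^sub>3 * \<eta> t * sqrt (L (t - 1) x) + C\<^sub>2 * (\<eta> t)\<^sup>2"
    and cond_exp: "\<And>t. 1 \<le> t \<Longrightarrow> AE x in M. \<bar>real_cond_exp M (F (t - 1)) (U t) x\<bar> \<le> C\<^sub>2 * (\<eta> t)\<^sup>2"
  shows "normalized_recursion M F L U (C\<^sub>3 / C\<^sub>1) (C\<^sub>2 / C\<^sub>1\<^sup>2) n\<^sub>0"
proof (rule normalized_recursion.intro[OF assms(1)], unfold_locales)
  have C\<^sub>1: "C\<^sub>1 \<noteq> 0" and "\<And>t. real t + real n\<^sub>0 \<noteq> 0" using assms(8,10) by auto
  note step = step_size_scaling[OF this]
  show "AE x in M. \<forall>t\<ge>1. L t x \<le> (1 - 2 / (real t + real n\<^sub>0)) * L (t - 1) x + U t x"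
    using recursion by eventually_elim (simp add: eta step C\<^sub>1)
  show "AE x in M. \<forall>t\<ge>1. \<bar>U t x\<bar> \<le> 2 * (C\<^sub>3 / C\<^sub>1) * sqrt (L (t - 1) x) / (real t + real n\<^sub>0)
      + 4 * (C\<^sub>2 / C\<^sub>1\<^sup>2) / (real t + real n\<^sub>0)\<^sup>2"
    using U_bound by eventually_elim (simp add: eta step mult_ac)
  show "AE x in M. \<bar>real_cond_exp M (F (t - 1)) (U t) x\<bar> \<le> 4 * (C\<^sub>2 / C\<^sub>1\<^sup>2) / (real t + real n\<^sub>0)\<^sup>2"
    if "1 \<le> t" for t
    using cond_exp[OF that] by (simp add: eta[OF that] step)
qed (use assms in auto)

theorem theorem2:
  fixes M :: "'a measure" and F :: "nat \<Rightarrow> 'a measure"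
    and L :: "nat \<Rightarrow> 'a \<Rightarrow> real" and U :: "nat \<Rightarrow> 'a \<Rightarrow> real"
    and \<eta> :: "nat \<Rightarrow> real"
    and C\<^sub>1 C\<^sub>2 C\<^sub>3 a \<delta> :: real and Lc :: nat
  assumes prob: "prob_space M"
    and filt_sub: "\<And>t. subalgebra M (F t)"
    and filt_mono: "\<And>s t. s \<le> t \<Longrightarrow> sets (F s) \<subseteq> sets (F t)"
    and L_adapted: "\<And>t. L t \<in> borel_measurable (F t)"
    and L_nonneg: "\<And>t x. x \<in> space M \<Longrightarrow> L t x \<ge> 0"
    and U_adapted: "\<And>t. t \<ge> 1 \<Longrightarrow> U t \<in> borel_measurable (F t)"
    and U_int: "\<And>t. t \<ge> 1 \<Longrightarrow> integrable M (U t)"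
    and C_pos: "C\<^sub>1 > 0" "C\<^sub>2 > 0" "C\<^sub>3 > 0"
    and Lc: "Lc \<ge> 3"
    and eta_def: "\<And>t. t \<ge> 1 \<Longrightarrow> \<eta> t = 2 / (C\<^sub>1 * (real t + real Lc))"
    and recursion: "AE x in M. \<forall>t\<ge>1. L t x \<le> (1 - C\<^sub>1 * \<eta> t) * L (t - 1) x + U t x"
    and U_bound: "AE x in M. \<forall>t\<ge>1. \<bar>U t x\<bar> \<le> C\<^sub>3 * \<eta> t * sqrt (L (t - 1) x) + C\<^sub>2 * (\<eta> t)\<^sup>2"
    and cond_exp_bound: "\<And>t. t \<ge> 1 \<Longrightarrow>
          AE x in M. \<bar>real_cond_exp M (F (t - 1)) (U t) x\<bar> \<le> C\<^sub>2 * (\<eta> t)\<^sup>2"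
    and a_pos: "a > 0"
    and \<delta>: "0 < \<delta>" "\<delta> < 1"
    and init: "measure M {x \<in> space M. L 0 x \<le> a} \<ge> 1 - \<delta>"
  shows "measure M {x \<in> space M. \<forall>t. L t x \<le>
            31.5 * (max (real Lc - 2) 32 * ((if Lc \<ge> 32 then 1 else 0) + 32 * (if Lc \<le> 31 then 1 else 0)))
              * max (max (a * real Lc / ln (1 / \<delta>)) (C\<^sub>2 / C\<^sub>1\<^sup>2)) (C\<^sub>3\<^sup>2 / C\<^sub>1\<^sup>2)
              * (ln (1 / \<delta>) + 2 * ln (ln (real t + 9))) / (real t + real Lc)}
         \<ge> 1 - 2 * \<delta>"
proof -
  define K :: real where
    "K = max (real Lc - 2) 32 * ((if Lc \<ge> 32 then 1 else 0) + 32 * (if Lc \<le> 31 then 1 else 0))"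
  define Mx where "Mx = max (max (a * real Lc / ln (1 / \<delta>)) (C\<^sub>2 / C\<^sub>1\<^sup>2)) (C\<^sub>3\<^sup>2 / C\<^sub>1\<^sup>2)"
  interpret normalized_recursion M F L U "C\<^sub>3 / C\<^sub>1" "C\<^sub>2 / C\<^sub>1\<^sup>2" Lc
    by (rule normalized_recursion_of_step_sizes[OF prob filt_sub filt_mono L_adapted L_nonneg
          U_adapted U_int C_pos(1,2) Lc eta_def recursion U_bound cond_exp_bound])
  interpret normalized_recursion_tail M F L U "C\<^sub>3 / C\<^sub>1" "C\<^sub>2 / C\<^sub>1\<^sup>2" Lc a Mx \<delta>
  proof unfold_locales
    have "a * real Lc / ln (1 / \<delta>) \<le> Mx" by (simp add: Mx_def)
    moreover have "0 < ln (1 / \<delta>)" using \<delta> by simp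
    ultimately show "a * real Lc \<le> Mx * ln (1 / \<delta>)" by (simp add: pos_divide_le_eq)
  qed (use a_pos \<delta> in \<open>simp_all add: Mx_def power_divide\<close>)
  have "1008 \<le> 31.5 * K" by (simp add: K_def)
  then have "1 - 2 * \<delta> \<le>
      measure M {x\<in>space M. \<forall>t. L t x \<le> 31.5 * K * Mx * (\<Lambda> + 2 * ln (ln (real t + 9))) / \<tau> t}"
    using tail_bound[of "31.5 * K"] init by (simp add: init_event_def)
  then show ?thesis by (simp add: K_def Mx_def)
qed

end
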